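(* Let $\Pi$ be a derivation in system $\mathcal L$ of $\Gamma\vdash M$. Then for every sequent $\Gamma'\vdash M'$ occurring in $\Pi$, we have $\Gamma'\cup\{M'\}\subseteq St(\Gamma\cup\{M\})$.
   Context: Fix names, variables and constructors $\mathsf{pub}$ (unary), $\mathsf{sign},\mathsf{blind},\langle\cdot,\cdot\rangle,\{\cdot\}_\cdot$ (binary). $E$ is an equational theory with signature $\Sigma_E$ disjoint from the constructors, with at most one associative-commutative (AC) binary symbol $\oplus$, presented by a rewrite system $R_E$ terminating and confluent modulo AC. Terms are ground terms over names, the constructors and $\Sigma_E$. $\equiv$ is equality modulo AC, $\approx_E$ equality modulo $E$. Guarded term: a name, a variable, or headed by a constructor. $E$-context: term with holes built only from symbols of $\Sigma_E$. Sequents $\Gamma\vdash M$ have all terms in normal form; $\Gamma,M$ means $\Gamma\cup\{M\}$. $\Gamma\Vdash_{\mathcal R}M$ means $\Gamma\vdash M$ is derivable using only: (id) $\Gamma\vdash M$ if $M\approx_E C[M_1,\dots,M_k]$ for an $E$-context $C$ and $M_i\in\Gamma$; and the right rules: from $\Gamma\vdash M$ and $\Gamma\vdash N$ infer $\Gamma\vdash\langle M,N\rangle$; from $\Gamma\vdash M$ and $\Gamma\vdash K$ infer $\Gamma\vdash\{M\}_K$, resp. $\Gamma\vdash\mathsf{sign}(M,K)$, resp. $\Gamma\vdash\mathsf{blind}(M,K)$. System $\mathcal L$: ($r$) $\Gamma\vdash M$ with no premise if $\Gamma\Vdash_{\mathcal R}M$; ($lp$) from $\Gamma,\langle M,N\rangle,M,N\vdash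 T$ infer $\Gamma,\langle M,N\rangle\vdash T$; ($le$) from $\Gamma,\{M\}_K,M,K\vdash N$ infer $\Gamma,\{M\}_K\vdash N$ if $\Gamma,\{M\}_K\Vdash_{\mathcal R}K$; ($\mathsf{sign}$) from $\Gamma,\mathsf{sign}(M,K),\mathsf{pub}(L),M\vdash N$ infer $\Gamma,\mathsf{sign}(M,K),\mathsf{pub}(L)\vdash N$ if $K\equiv L$; ($\mathsf{blind}_1$) from $\Gamma,\mathsf{blind}(M,K),M,K\vdash N$ infer $\Gamma,\mathsf{blind}(M,K)\vdash N$ if $\Gamma,\mathsf{blind}(M,K)\Vdash_{\mathcal R}K$; ($\mathsf{blind}_2$) from $\Gamma,\mathsf{sign}(\mathsf{blind}(M,R),K),\mathsf{sign}(M,K),R\vdash N$ infer $\Gamma,\mathsf{sign}(\mathsf{blind}(M,R),K)\vdash N$ if $\Gamma,\mathsf{sign}(\mathsf{blind}(M,R),K)\Vdash_{\mathcal R}R$; ($ls$) from $\Gamma,A\vdash M$ infer $\Gamma\vdash M$ if $A$ is a guarded subterm of a term in $\Gamma\cup\{M\}$ and $\Gamma\Vdash_{\mathcal R}A$. For a set of terms $\Delta$: $pst(\Delta)$ is the set of proper subterms of terms in $\Delta$ ($N$ is a proper subterm of $P$ if it is a subterm with $N\neq P$); $sst(\Delta)=\{\mathsf{sign}(M,N)\mid M,N\in pst(\Delta)\}$; $St(\Delta)=\Delta\cup pst(\Delta)\cup sst(\Delta)$. *)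

theory Defs
  imports Main
begin

text \<open>Names of type 'n, symbols of the equational signature Sigma_E of type 'f
 (disjoint from the constructors by construction), variables (used as holes of
 E-contexts and as variables of rewrite rules).\<close>

datatype ('n, 'f) trm =
    Nm 'n
  | Vr nat
  | Pub "('n, 'f) trm"
  | Sign "('n, 'f) trm" "('n, 'f) trm"
  | Blind "('n, 'f) trm" "('n, 'f) trm"
  | Pair "('n, 'f) trm" "('n, 'f) trm"
  | Enc "('n, 'f) trm" "('n, 'f) trm"    \<comment> \<open>Enc M K stands for {M}_K\<close>
  | Fn 'f "('n, 'f) trm list"

fun vars :: "('n, 'f) trm \<Rightarrow> nat set" where
  "vars (Nm a) = {}"
| "vars (Vr x) = {x}"
| "vars (Pub t) = vars t"
| "vars (Sign s t) = vars s \<union> vars t"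
| "vars (Blind s t) = vars s \<union> vars t"
| "vars (Pair s t) = vars s \<union> vars t"
| "vars (Enc s t) = vars s \<union> vars t"
| "vars (Fn f ts) = (\<Union>t\<in>set ts. vars t)"

definition ground :: "('n, 'f) trm \<Rightarrow> bool" where
  "ground t \<longleftrightarrow> vars t = {}"

fun subst :: "(nat \<Rightarrow> ('n, 'f) trm) \<Rightarrow> ('n, 'f) trm \<Rightarrow> ('n, 'f) trm" where
  "subst \<sigma> (Nm a) = Nm a"
| "subst \<sigma> (Vr x) = \<sigma> x"
| "subst \<sigma> (Pub t) = Pub (subst \<sigma> t)"
| "subst \<sigma> (Sign s t) = Sign (subst \<sigma> s) (subst \<sigma> t)"
| "subst \<sigma> (Blind s t) = Blind (subst \<sigma> s) (subst \<sigma> t)"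
| "subst \<sigma> (Pair s t) = Pair (subst \<sigma> s) (subst \<sigma> t)"
| "subst \<sigma> (Enc s t) = Enc (subst \<sigma> s) (subst \<sigma> t)"
| "subst \<sigma> (Fn f ts) = Fn f (map (subst \<sigma>) ts)"

fun eterm :: "('n, 'f) trm \<Rightarrow> bool" where
  "eterm (Vr x) = True"
| "eterm (Fn f ts) = (\<forall>t\<in>set ts. eterm t)"
| "eterm _ = False"

fun subterms :: "('n, 'f) trm \<Rightarrow> ('n, 'f) trm set" where
  "subterms (Nm a) = {Nm a}"
| "subterms (Vr x) = {Vr x}"
| "subterms (Pub t) = insert (Pub t) (subterms t)"
| "subterms (Sign s t) = insert (Sign s t) (subterms s \<union> subterms t)"
| "subterms (Blind s t) = insert (Blind s t) (subterms s \<union> subterms t)"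
| "subterms (Pair s t) = insert (Pair s t) (subterms s \<union> subterms t)"
| "subterms (Enc s t) = insert (Enc s t) (subterms s \<union> subterms t)"
| "subterms (Fn f ts) = insert (Fn f ts) (\<Union>t\<in>set ts. subterms t)"

fun guarded :: "('n, 'f) trm \<Rightarrow> bool" where
  "guarded (Fn f ts) = False"
| "guarded _ = True"

definition pst :: "('n, 'f) trm set \<Rightarrow> ('n, 'f) trm set" where
  "pst \<Delta> = {N. \<exists>P\<in>\<Delta>. N \<in> subterms P \<and> N \<noteq> P}"

definition sst :: "('n, 'f) trm set \<Rightarrow> ('n, 'f) trm set" where
  "sst \<Delta> = {Sign M N | M N. M \<in> pst \<Delta> \<and> N \<in> pst \<Delta>}"

definition St :: "('n, 'f) trm set \<Rightarrow> ('n, 'f) trm set" where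
  "St \<Delta> = \<Delta> \<union> pst \<Delta> \<union> sst \<Delta>"

text \<open>acs: the (at most one) AC symbol of Sigma_E.  ac_eq acs is equality modulo AC.\<close>
inductive ac_eq :: "'f option \<Rightarrow> ('n, 'f) trm \<Rightarrow> ('n, 'f) trm \<Rightarrow> bool"
  for acs :: "'f option" where
  ac_refl: "ac_eq acs t t"
| ac_sym: "ac_eq acs s t \<Longrightarrow> ac_eq acs t s"
| ac_trans: "ac_eq acs s t \<Longrightarrow> ac_eq acs t u \<Longrightarrow> ac_eq acs s u"
| ac_comm: "acs = Some f \<Longrightarrow> ac_eq acs (Fn f [x, y]) (Fn f [y, x])"
| ac_assoc: "acs = Some f \<Longrightarrow> ac_eq acs (Fn f [x, Fn f [y, z]]) (Fn f [Fn f [x, y], z])"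
| ac_pub: "ac_eq acs s s' \<Longrightarrow> ac_eq acs (Pub s) (Pub s')"
| ac_sign: "ac_eq acs s s' \<Longrightarrow> ac_eq acs t t' \<Longrightarrow> ac_eq acs (Sign s t) (Sign s' t')"
| ac_blind: "ac_eq acs s s' \<Longrightarrow> ac_eq acs t t' \<Longrightarrow> ac_eq acs (Blind s t) (Blind s' t')"
| ac_pair: "ac_eq acs s s' \<Longrightarrow> ac_eq acs t t' \<Longrightarrow> ac_eq acs (Pair s t) (Pair s' t')"
| ac_enc: "ac_eq acs s s' \<Longrightarrow> ac_eq acs t t' \<Longrightarrow> ac_eq acs (Enc s t) (Enc s' t')"
| ac_fn: "list_all2 (ac_eq acs) ts ts' \<Longrightarrow> ac_eq acs (Fn f ts) (Fn f ts')"

inductive rstep :: "(('n, 'f) trm \<times> ('n, 'f) trm) set \<Rightarrow> ('n, 'f) trm \<Rightarrow> ('n, 'f) trm \<Rightarrow> bool"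
  for R :: "(('n, 'f) trm \<times> ('n, 'f) trm) set" where
  rs_rule: "(l, r) \<in> R \<Longrightarrow> rstep R (subst \<sigma> l) (subst \<sigma> r)"
| rs_pub: "rstep R s s' \<Longrightarrow> rstep R (Pub s) (Pub s')"
| rs_sign1: "rstep R s s' \<Longrightarrow> rstep R (Sign s t) (Sign s' t)"
| rs_sign2: "rstep R t t' \<Longrightarrow> rstep R (Sign s t) (Sign s t')"
| rs_blind1: "rstep R s s' \<Longrightarrow> rstep R (Blind s t) (Blind s' t)"
| rs_blind2: "rstep R t t' \<Longrightarrow> rstep R (Blind s t) (Blind s t')"
| rs_pair1: "rstep R s s' \<Longrightarrow> rstep R (Pair s t) (Pair s' t)"
| rs_pair2: "rstep R t t' \<Longrightarrow> rstep R (Pair s t) (Pair s t')"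
| rs_enc1: "rstep R s s' \<Longrightarrow> rstep R (Enc s t) (Enc s' t)"
| rs_enc2: "rstep R t t' \<Longrightarrow> rstep R (Enc s t) (Enc s t')"
| rs_fn: "rstep R s s' \<Longrightarrow> rstep R (Fn f (xs @ s # ys)) (Fn f (xs @ s' # ys))"

definition rstep_ac :: "(('n, 'f) trm \<times> ('n, 'f) trm) set \<Rightarrow> 'f option
    \<Rightarrow> ('n, 'f) trm \<Rightarrow> ('n, 'f) trm \<Rightarrow> bool" where
  "rstep_ac R acs s t \<longleftrightarrow> (\<exists>s' t'. ac_eq acs s s' \<and> rstep R s' t' \<and> ac_eq acs t' t)"

definition normal :: "(('n, 'f) trm \<times> ('n, 'f) trm) set \<Rightarrow> 'f option \<Rightarrow> ('n, 'f) trm \<Rightarrow> bool" where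
  "normal R acs t \<longleftrightarrow> \<not> (\<exists>u. rstep_ac R acs t u)"

inductive eqE :: "(('n, 'f) trm \<times> ('n, 'f) trm) set \<Rightarrow> 'f option
    \<Rightarrow> ('n, 'f) trm \<Rightarrow> ('n, 'f) trm \<Rightarrow> bool"
  for R :: "(('n, 'f) trm \<times> ('n, 'f) trm) set" and acs :: "'f option" where
  eq_ac: "ac_eq acs s t \<Longrightarrow> eqE R acs s t"
| eq_step: "rstep R s t \<Longrightarrow> eqE R acs s t"
| eq_sym: "eqE R acs s t \<Longrightarrow> eqE R acs t s"
| eq_trans: "eqE R acs s t \<Longrightarrow> eqE R acs t u \<Longrightarrow> eqE R acs s u"

definition good_theory :: "(('n, 'f) trm \<times> ('n, 'f) trm) set \<Rightarrow> 'f option \<Rightarrow> bool" where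
  "good_theory R acs \<longleftrightarrow>
     (\<forall>(l, r)\<in>R. eterm l \<and> eterm r) \<and>
     wfP (\<lambda>t s. rstep_ac R acs s t) \<and>
     (\<forall>s t u. (rstep_ac R acs)\<^sup>*\<^sup>* s t \<longrightarrow> (rstep_ac R acs)\<^sup>*\<^sup>* s u \<longrightarrow>
        (\<exists>v w. (rstep_ac R acs)\<^sup>*\<^sup>* t v \<and> (rstep_ac R acs)\<^sup>*\<^sup>* u w \<and> ac_eq acs v w))"

type_synonym ('n, 'f) sequent = "('n, 'f) trm set \<times> ('n, 'f) trm"

inductive rderiv :: "(('n, 'f) trm \<times> ('n, 'f) trm) set \<Rightarrow> 'f option
    \<Rightarrow> ('n, 'f) trm set \<Rightarrow> ('n, 'f) trm \<Rightarrow> bool"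
  for R :: "(('n, 'f) trm \<times> ('n, 'f) trm) set" and acs :: "'f option" where
  r_id: "eterm C \<Longrightarrow> (\<forall>x\<in>vars C. \<sigma> x \<in> \<Gamma>) \<Longrightarrow> eqE R acs M (subst \<sigma> C)
           \<Longrightarrow> rderiv R acs \<Gamma> M"
| r_pair: "rderiv R acs \<Gamma> M \<Longrightarrow> rderiv R acs \<Gamma> N \<Longrightarrow> rderiv R acs \<Gamma> (Pair M N)"
| r_enc: "rderiv R acs \<Gamma> M \<Longrightarrow> rderiv R acs \<Gamma> K \<Longrightarrow> rderiv R acs \<Gamma> (Enc M K)"
| r_sign: "rderiv R acs \<Gamma> M \<Longrightarrow> rderiv R acs \<Gamma> K \<Longrightarrow> rderiv R acs \<Gamma> (Sign M K)"
| r_blind: "rderiv R acs \<Gamma> M \<Longrightarrow> rderiv R acs \<Gamma> K \<Longrightarrow> rderiv R acs \<Gamma> (Blind M K)"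

text \<open>Rule instances of system L: conclusion and list of premises.
 A conclusion written "Gamma, X |- N" in the paper is a set G containing X.\<close>
inductive Lrule :: "(('n, 'f) trm \<times> ('n, 'f) trm) set \<Rightarrow> 'f option
    \<Rightarrow> ('n, 'f) sequent \<Rightarrow> ('n, 'f) sequent list \<Rightarrow> bool"
  for R :: "(('n, 'f) trm \<times> ('n, 'f) trm) set" and acs :: "'f option" where
  L_r: "rderiv R acs G M \<Longrightarrow> Lrule R acs (G, M) []"
| L_lp: "Pair M N \<in> G \<Longrightarrow> Lrule R acs (G, T) [(G \<union> {M, N}, T)]"
| L_le: "Enc M K \<in> G \<Longrightarrow> rderiv R acs G K \<Longrightarrow> Lrule R acs (G, N) [(G \<union> {M, K}, N)]"
| L_sign: "Sign M K \<in> G \<Longrightarrow> Pub L \<in> G \<Longrightarrow> ac_eq acs K L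
           \<Longrightarrow> Lrule R acs (G, N) [(G \<union> {M}, N)]"
| L_blind1: "Blind M K \<in> G \<Longrightarrow> rderiv R acs G K \<Longrightarrow> Lrule R acs (G, N) [(G \<union> {M, K}, N)]"
| L_blind2: "Sign (Blind M Rr) K \<in> G \<Longrightarrow> rderiv R acs G Rr
           \<Longrightarrow> Lrule R acs (G, N) [(G \<union> {Sign M K, Rr}, N)]"
| L_ls: "guarded A \<Longrightarrow> (\<exists>P\<in>G \<union> {M}. A \<in> subterms P) \<Longrightarrow> rderiv R acs G A
           \<Longrightarrow> Lrule R acs (G, M) [(G \<union> {A}, M)]"

definition is_sequent :: "(('n, 'f) trm \<times> ('n, 'f) trm) set \<Rightarrow> 'f option \<Rightarrow> ('n, 'f) sequent \<Rightarrow> bool" where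
  "is_sequent R acs s \<longleftrightarrow> (\<forall>t\<in>fst s \<union> {snd s}. ground t \<and> normal R acs t)"

datatype 's dtree = DNode 's "'s dtree list"

fun root :: "'s dtree \<Rightarrow> 's" where
  "root (DNode s ts) = s"

fun nodes :: "'s dtree \<Rightarrow> 's set" where
  "nodes (DNode s ts) = insert s (\<Union>t\<in>set ts. nodes t)"

fun Lderivation :: "(('n, 'f) trm \<times> ('n, 'f) trm) set \<Rightarrow> 'f option
    \<Rightarrow> ('n, 'f) sequent dtree \<Rightarrow> bool" where
  "Lderivation R acs (DNode s ts) \<longleftrightarrow>
     is_sequent R acs s \<and> Lrule R acs s (map root ts) \<and> (\<forall>t\<in>set ts. Lderivation R acs t)"

end

theory Submission
  imports Defs
begin

text \<open>Reading a derivation from the root upwards, every rule of L keeps the right-hand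
  side and adds to the left-hand side only subterms of terms already present, except
  blind2, which adds Sign M K in the presence of Sign (Blind M R) K; there M and K are
  proper subterms, so Sign M K lies in sst. Since St is closed under subterms, it is an
  invariant of the derivation. The argument is purely syntactic: no property of E is used.\<close>

lemma subterms_refl [simp]: "t \<in> subterms t"
  by (cases t) auto

lemma subterms_trans: "s \<in> subterms t \<Longrightarrow> u \<in> subterms s \<Longrightarrow> u \<in> subterms t"
  by (induction t rule: subterms.induct) auto

lemma size_subterms_le: "s \<in> subterms t \<Longrightarrow> size s \<le> size t"
proof (induction t rule: subterms.induct)
  case (8 f ts)
  show ?case
  proof (cases "s = Fn f ts")
    case False
    then obtain t where "t \<in> set ts" and "s \<in> subterms t" using "8.prems" by auto
    then have "size s \<le> size t" and "size t \<le> size_list size ts"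
      using "8.IH" by (auto intro: size_list_estimation')
    then show ?thesis by simp
  qed simp
qed auto

lemma size_proper_subterm_less: "s \<in> subterms t \<Longrightarrow> s \<noteq> t \<Longrightarrow> size s < size t"
proof (induction t rule: subterms.induct)
  case (8 f ts)
  then obtain t where "t \<in> set ts" and "s \<in> subterms t" by auto
  then have "size s \<le> size t" and "size t \<le> size_list size ts"
    by (auto intro: size_subterms_le size_list_estimation')
  then show ?case by simp
qed (auto dest: size_subterms_le)

lemma pst_subterms_closed: "s \<in> pst D \<Longrightarrow> u \<in> subterms s \<Longrightarrow> u \<in> pst D"
proof -
  assume "s \<in> pst D" and u: "u \<in> subterms s"
  then obtain P where "P \<in> D" and s: "s \<in> subterms P" "s \<noteq> P"
    unfolding pst_def by blast
  have "size u < size P"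
    using size_subterms_le[OF u] size_proper_subterm_less[OF s] by simp
  then show "u \<in> pst D"
    unfolding pst_def using \<open>P \<in> D\<close> subterms_trans[OF s(1) u] by blast
qed

lemma St_subterms_closed:
  assumes "t \<in> St D" and "s \<in> subterms t"
  shows "s \<in> St D"
proof -
  have "s \<in> D \<union> pst D \<union> sst D" if "t \<in> D"
    using that assms(2) unfolding pst_def by blast
  moreover have "s \<in> pst D" if "t \<in> pst D"
    using that assms(2) by (rule pst_subterms_closed)
  moreover have "s \<in> pst D \<union> sst D" if "t \<in> sst D"
    using that assms(2) unfolding sst_def by (auto dest: pst_subterms_closed)
  ultimately show ?thesis
    using assms(1) unfolding St_def by blast
qed

lemma St_Sign_args_pst:
  assumes "Sign M K \<in> St D"
  shows "M \<in> pst D \<and> K \<in> pst D"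
  using assms unfolding St_def
proof (elim UnE)
  assume "Sign M K \<in> D"
  then show ?thesis unfolding pst_def by force
next
  assume "Sign M K \<in> pst D"
  then show ?thesis by (simp add: pst_subterms_closed)
qed (auto simp: sst_def)

lemma St_Sign_Blind:
  assumes "Sign (Blind M R) K \<in> St D"
  shows "Sign M K \<in> St D" and "R \<in> St D"
proof -
  have "Blind M R \<in> pst D" and K: "K \<in> pst D"
    using St_Sign_args_pst[OF assms] by simp_all
  then have "M \<in> pst D" and "R \<in> pst D"
    by (simp_all add: pst_subterms_closed)
  with K show "Sign M K \<in> St D" and "R \<in> St D"
    unfolding St_def sst_def by auto
qed

lemma Lrule_premise_St:
  assumes "Lrule R acs (G, M) ps" and "G \<union> {M} \<subseteq> St D" and "(G', M') \<in> set ps"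
  shows "G' \<union> {M'} \<subseteq> St D"
proof -
  have sub: "s \<in> St D" if "P \<in> G \<union> {M}" and "s \<in> subterms P" for P s
    using that assms(2) St_subterms_closed by blast
  from assms(1) show ?thesis
  proof cases
    case L_r
    then show ?thesis using assms(3) by simp
  next
    case (L_lp N1 N2)
    then show ?thesis using assms(2,3) sub[of "Pair N1 N2"] by auto
  next
    case (L_le N K)
    then show ?thesis using assms(2,3) sub[of "Enc N K"] by auto
  next
    case (L_sign N K L)
    then show ?thesis using assms(2,3) sub[of "Sign N K"] by auto
  next
    case (L_blind1 N K)
    then show ?thesis using assms(2,3) sub[of "Blind N K"] by auto
  next
    case (L_blind2 N Rr K)
    then show ?thesis using assms(2,3) St_Sign_Blind[of N Rr K D] by auto
  next
    case (L_ls A)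
    then show ?thesis using assms(2,3) sub by auto
  qed
qed

lemma Lderivation_nodes_St:
  assumes "Lderivation R acs T" and "fst (root T) \<union> {snd (root T)} \<subseteq> St D"
  shows "\<forall>(G, M) \<in> nodes T. G \<union> {M} \<subseteq> St D"
  using assms
proof (induction T)
  case (DNode s ts)
  obtain G M where s: "s = (G, M)" by fastforce
  have rule: "Lrule R acs (G, M) (map root ts)" and root: "G \<union> {M} \<subseteq> St D"
    using DNode.prems s by simp_all
  have "\<forall>(G', M') \<in> nodes t. G' \<union> {M'} \<subseteq> St D" if t: "t \<in> set ts" for t
  proof (rule DNode.IH[OF t])
    show "Lderivation R acs t" using DNode.prems(1) t by simp
    have "(fst (root t), snd (root t)) \<in> set (map root ts)" using t by simp
    then show "fst (root t) \<union> {snd (root t)} \<subseteq> St D"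
      by (rule Lrule_premise_St[OF rule root])
  qed
  with root s show ?case by auto
qed

theorem lemma5:
  fixes R :: "(('n, 'f) trm \<times> ('n, 'f) trm) set"
    and acs :: "'f option"
    and \<Pi> :: "('n, 'f) sequent dtree"
    and \<Gamma> :: "('n, 'f) trm set" and M :: "('n, 'f) trm"
  assumes "good_theory R acs"
    and "Lderivation R acs \<Pi>"
    and "root \<Pi> = (\<Gamma>, M)"
  shows "\<forall>(\<Gamma>', M') \<in> nodes \<Pi>. \<Gamma>' \<union> {M'} \<subseteq> St (\<Gamma> \<union> {M})"
proof (rule Lderivation_nodes_St[OF assms(2)])
  have "\<Gamma> \<union> {M} \<subseteq> St (\<Gamma> \<union> {M})"
    unfolding St_def by (rule Un_upper1[THEN subset_trans[OF _ Un_upper1]])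
  then show "fst (root \<Pi>) \<union> {snd (root \<Pi>)} \<subseteq> St (\<Gamma> \<union> {M})"
    using assms(3) by simp
qed

end
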